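(* Let $\theta$, $\epsilon>0$ and $\Lambda$ be as in the context. Let $a,b,d\in\mathbb{Z}$ with $d\neq0$, $(a,b)\neq(0,0)$ and $\gcd(a,b,d)=1$, let $\lambda=a\cos\theta-b\sin\theta$, so that $\lambda^*=a\sin\theta+b\cos\theta$, and let $w=(1,\lambda/d)$. Define $S\subset\mathbb{R}$ by $\{0\}\times S=(\Lambda+w\mathbb{R})\cap(\{0\}\times\mathbb{R})$, where $\Lambda+w\mathbb{R}=\{p+tw:\ p\in\Lambda,\ t\in\mathbb{R}\}$. If $\epsilon\ge 1/|\lambda^*|$, then $S$ is a dense subset of $\mathbb{R}$. If $0<\epsilon<1/|\lambda^*|$, then the closure of $S$ is $$\mathrm{cl}(S)=\left\{\frac{l+t\lambda^*}{d}:\ 0\le t\le\epsilon,\ l\in\mathbb{Z}\right\}.$$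
   Context: Fix $\theta$ with $\tan\theta$ irrational and $\epsilon>0$. Define $\Lambda_F=\{m\cos\theta-n\sin\theta:\ m,n\in\mathbb{Z},\ 0\le m\sin\theta+n\cos\theta<\epsilon\}$ and $\Lambda=\Lambda_F\times\mathbb{Z}\subset\mathbb{R}^2$. For $x=m\cos\theta-n\sin\theta$ with $m,n\in\mathbb{Z}$ (the integers $m,n$ are uniquely determined by $x$ since $\tan\theta$ is irrational), write $x^*=m\sin\theta+n\cos\theta$. *)

theory Defs
  imports "HOL-Analysis.Analysis"
begin

definition LambdaF :: "real \<Rightarrow> real \<Rightarrow> real set" where
  "LambdaF \<theta> \<epsilon> = {of_int m * cos \<theta> - of_int n * sin \<theta> | m n :: int.
      0 \<le> of_int m * sin \<theta> + of_int n * cos \<theta> \<and> of_int m * sin \<theta> + of_int n * cos \<theta> < \<epsilon>}"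

definition Lambda :: "real \<Rightarrow> real \<Rightarrow> (real \<times> real) set" where
  "Lambda \<theta> \<epsilon> = LambdaF \<theta> \<epsilon> \<times> \<int>"

end

theory Submission
  imports Defs
begin

text \<open>
  Write \<open>x = m cos\<theta> - n sin\<theta>\<close> and \<open>x* = m sin\<theta> + n cos\<theta>\<close> for a lattice point \<open>(m, n)\<close>.
  The rotation identity \<open>\<lambda> x = a m + b n - \<lambda>* x*\<close> shows that the vertical section \<open>S\<close> of
  \<open>\<Lambda> + w\<real>\<close> consists exactly of the numbers \<open>(l + x* \<lambda>*) / d\<close> with \<open>l = d k - a m - b n\<close> and
  \<open>0 \<le> x* < \<epsilon>\<close>.  Hence \<open>S\<close> lies in the closed set \<open>T = {(l + t \<lambda>*) / d | l \<in> \<int>, 0 \<le> t \<le> \<epsilon>}\<close>.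
  Conversely, since \<open>gcd(a, b, d) = 1\<close> every integer \<open>l\<close> has the form \<open>d k - a m - b n\<close>, and
  shifting \<open>(m, n)\<close> by \<open>d (p, q)\<close> keeps \<open>l\<close> fixed while moving \<open>x*\<close> by \<open>d (p sin\<theta> + q cos\<theta>)\<close>,
  which by Kronecker's theorem (\<open>tan\<theta>\<close> irrational) is dense; so \<open>T \<subseteq> closure S\<close> and
  \<open>closure S = T\<close>.  Finally \<open>T = \<real>\<close> as soon as \<open>\<epsilon> |\<lambda>*| \<ge> 1\<close>, because then the translates
  of the segment \<open>[0, \<epsilon> \<lambda>*]\<close> by the integers cover the line.
\<close>

definition star_coord :: "real \<Rightarrow> int \<Rightarrow> int \<Rightarrow> real" where
  "star_coord \<theta> m n = of_int m * sin \<theta> + of_int n * cos \<theta>"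

definition window_hull :: "real \<Rightarrow> real \<Rightarrow> int \<Rightarrow> real set" where
  "window_hull L \<epsilon> d = {(of_int l + t * L) / of_int d | l t. 0 \<le> t \<and> t \<le> \<epsilon> \<and> l \<in> (UNIV :: int set)}"

text \<open>The set of numbers \<open>(l + x* \<lambda>*) / d\<close> with \<open>l = d k - a m - b n\<close> and \<open>x*\<close> in the window;
  it will turn out to be the vertical section \<open>S\<close>.\<close>
definition section_set :: "real \<Rightarrow> real \<Rightarrow> int \<Rightarrow> int \<Rightarrow> int \<Rightarrow> real set" where
  "section_set \<theta> \<epsilon> a b d =
     {(of_int (d * k - a * m - b * n) + star_coord \<theta> m n * star_coord \<theta> a b) / of_int d | k m n.
        0 \<le> star_coord \<theta> m n \<and> star_coord \<theta> m n < \<epsilon>}"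

text \<open>An irrational tangent forces \<open>cos\<theta> \<noteq> 0\<close> (otherwise \<open>tan\<theta> = 0\<close>).\<close>
lemma cos_nonzero_if_tan_irrational:
  assumes "tan \<theta> \<notin> \<rat>"
  shows "cos \<theta> \<noteq> 0"
  using assms by (auto simp: tan_def)

text \<open>Only the origin has star coordinate zero, since \<open>a sin\<theta> + b cos\<theta> = 0\<close> would make
  \<open>tan\<theta> = -b/a\<close> rational.\<close>
lemma star_coord_nonzero:
  assumes irr: "tan \<theta> \<notin> \<rat>" and ab: "(a, b) \<noteq> (0, 0)"
  shows "star_coord \<theta> a b \<noteq> 0"
proof
  assume zero: "star_coord \<theta> a b = 0"
  have cos: "cos \<theta> \<noteq> 0" using cos_nonzero_if_tan_irrational[OF irr] .
  show False
  proof (cases "a = 0")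
    case True
    then have "b = 0" using zero cos by (simp add: star_coord_def)
    with True ab show False by simp
  next
    case False
    then have "tan \<theta> = - of_int b / of_int a"
      using zero cos by (simp add: star_coord_def tan_def field_simps)
    with irr show False by simp
  qed
qed

text \<open>The rotation identity \<open>\<lambda> x = a m + b n - \<lambda>* x*\<close>, a consequence of \<open>sin\<^sup>2 + cos\<^sup>2 = 1\<close>.\<close>
lemma rotation_identity:
  "(of_int a * cos \<theta> - of_int b * sin \<theta>) * (of_int m * cos \<theta> - of_int n * sin \<theta>)
     = of_int (a * m + b * n) - star_coord \<theta> a b * star_coord \<theta> m n"
proof -
  have "(A * C - B * Sn) * (M * C - N * Sn)
      = (A * M + B * N) * (Sn\<^sup>2 + C\<^sup>2) - (A * Sn + B * C) * (M * Sn + N * C)"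
    for A B M N C Sn :: real
    by (simp add: power2_eq_square algebra_simps)
  from this[of "of_int a" "cos \<theta>" "of_int b" "sin \<theta>" "of_int m" "of_int n"] show ?thesis
    by (simp add: star_coord_def)
qed

text \<open>Kronecker: the star coordinates of the sublattice \<open>d \<int>\<^sup>2\<close> are dense in \<open>\<real>\<close>.\<close>
lemma star_coord_multiples_dense:
  assumes irr: "tan \<theta> \<notin> \<rat>" and d: "d \<noteq> 0" and r: "r > 0"
  obtains p q :: int where "\<bar>of_int d * star_coord \<theta> p q - z\<bar> < r"
proof -
  define D where "D = of_int d * cos \<theta>"
  have D: "D \<noteq> 0" using cos_nonzero_if_tan_irrational[OF irr] d by (simp add: D_def)
  have "r / \<bar>D\<bar> > 0" using D r by simp
  then obtain h k where hk: "\<bar>of_int k * tan \<theta> - of_int h - z / D\<bar> < r / \<bar>D\<bar>"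
    using sequence_of_fractional_parts_is_dense[OF irr] by blast
  have "of_int d * star_coord \<theta> k (-h) - z = D * (of_int k * tan \<theta> - of_int h - z / D)"
    using D by (simp add: D_def star_coord_def tan_def field_simps)
  then have "\<bar>of_int d * star_coord \<theta> k (-h) - z\<bar> = \<bar>D\<bar> * \<bar>of_int k * tan \<theta> - of_int h - z / D\<bar>"
    by (simp add: abs_mult)
  also have "\<dots> < \<bar>D\<bar> * (r / \<bar>D\<bar>)" using hk D by (intro mult_strict_left_mono) auto
  also have "\<dots> = r" using D by simp
  finally show thesis by (rule that)
qed

text \<open>\<open>T\<close> is closed: it is the preimage under \<open>y \<mapsto> d y\<close> of \<open>\<int> + [0, \<epsilon>] L\<close>, the sum of a closed
  and a compact set.\<close>
lemma closed_window_hull: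
  assumes d: "d \<noteq> 0"
  shows "closed (window_hull L \<epsilon> d)"
proof -
  define I where "I = (\<lambda>t. t * L) ` {0..\<epsilon>}"
  have "compact I" unfolding I_def
    by (intro compact_continuous_image continuous_intros compact_Icc)
  then have closed_sum: "closed (\<Union>x\<in>(\<int>::real set). \<Union>y\<in>I. {x + y})"
    by (rule closed_compact_sums[OF closed_Ints])
  have "window_hull L \<epsilon> d = (\<lambda>y. of_int d * y) -` (\<Union>x\<in>(\<int>::real set). \<Union>y\<in>I. {x + y})"
  proof (intro set_eqI iffI)
    fix y assume "y \<in> window_hull L \<epsilon> d"
    then obtain l t where "0 \<le> t" "t \<le> \<epsilon>" "y = (of_int l + t * L) / of_int d"
      by (auto simp: window_hull_def)
    then have "t * L \<in> I" and "of_int d * y = of_int l + t * L"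
      using d by (auto simp: I_def)
    then show "y \<in> (\<lambda>y. of_int d * y) -` (\<Union>x\<in>(\<int>::real set). \<Union>y\<in>I. {x + y})"
      using Ints_of_int by fastforce
  next
    fix y assume "y \<in> (\<lambda>y. of_int d * y) -` (\<Union>x\<in>(\<int>::real set). \<Union>y\<in>I. {x + y})"
    then obtain l t where t: "0 \<le> t" "t \<le> \<epsilon>" and eq: "of_int d * y = of_int l + t * L"
      by (auto simp: I_def elim!: Ints_cases)
    from eq d have "y = (of_int l + t * L) / of_int d" by (simp add: field_simps)
    with t show "y \<in> window_hull L \<epsilon> d" unfolding window_hull_def by blast
  qed
  with closed_sum show ?thesis
    by (simp add: continuous_closed_vimage continuous_intros)
qed

text \<open>Every real number differs from an integer by a multiple \<open>t L\<close> with \<open>0 \<le> t \<le> 1/|L|\<close>: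
  for \<open>L > 0\<close> take the fractional part, and reduce \<open>L < 0\<close> to this by negating.\<close>
lemma integer_plus_segment:
  fixes L D :: real
  assumes L: "L \<noteq> 0"
  obtains l :: int and t where "0 \<le> t" "t \<le> 1 / \<bar>L\<bar>" "D = of_int l + t * L"
proof -
  have pos: "\<exists>l::int. \<exists>t. 0 \<le> t \<and> t \<le> 1 / L \<and> D' = of_int l + t * L" if "L > 0" for D' L :: real
  proof (intro exI conjI)
    show "0 \<le> frac D' / L" "frac D' / L \<le> 1 / L"
      using that frac_lt_1[of D'] by (auto intro: divide_right_mono)
    show "D' = of_int \<lfloor>D'\<rfloor> + frac D' / L * L" using that by (simp add: frac_def)
  qed
  show thesis
  proof (cases "L > 0")
    case True
    with pos[OF True] that show thesis by auto
  next
    case False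
    with L have "- L > 0" by simp
    from pos[OF this, of "- D"] obtain l t where "0 \<le> t" "t \<le> 1 / - L" "- D = of_int l + t * - L"
      by blast
    with False that[of t "- l"] show thesis by auto
  qed
qed

lemma window_hull_UNIV:
  assumes d: "d \<noteq> 0" and L: "L \<noteq> 0" and big: "\<epsilon> \<ge> 1 / \<bar>L\<bar>"
  shows "window_hull L \<epsilon> d = UNIV"
proof (intro set_eqI iffI)
  fix y :: real
  obtain l t where t: "0 \<le> t" "t \<le> 1 / \<bar>L\<bar>" and eq: "of_int d * y = of_int l + t * L"
    using integer_plus_segment[OF L] by blast
  have "y = (of_int l + t * L) / of_int d" using eq d by (simp add: field_simps)
  with t big show "y \<in> window_hull L \<epsilon> d" unfolding window_hull_def by force
qed simp

text \<open>Description of the vertical section of \<open>\<Lambda> + w\<real>\<close>: the point \<open>(x, k) + t w\<close> lies on the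
  vertical axis iff \<open>t = -x\<close>, and then the rotation identity rewrites its height.\<close>
lemma vertical_section_eq:
  fixes \<theta> \<epsilon> :: real and a b d :: int
  assumes d: "d \<noteq> 0"
  shows "{s. (0, s) \<in> {p + t *\<^sub>R (1, (of_int a * cos \<theta> - of_int b * sin \<theta>) / of_int d) | p t.
                         p \<in> Lambda \<theta> \<epsilon>}}
         = section_set \<theta> \<epsilon> a b d" (is "?S = _")
proof -
  let ?lam = "of_int a * cos \<theta> - of_int b * sin \<theta>"
  have height: "of_int k - (of_int m * cos \<theta> - of_int n * sin \<theta>) * (?lam / of_int d)
      = (of_int (d * k - a * m - b * n) + star_coord \<theta> m n * star_coord \<theta> a b) / of_int d"
    for k m n :: int
    using rotation_identity[of a \<theta> b m n] d by (simp add: field_simps)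
  show ?thesis
  proof (intro set_eqI iffI)
    fix u assume "u \<in> ?S"
    then obtain x j t where x: "x \<in> LambdaF \<theta> \<epsilon>" and j: "j \<in> \<int>"
      and eq: "(0, u) = (x, j) + t *\<^sub>R (1, ?lam / of_int d)"
      by (auto simp: Lambda_def)
    from x obtain m n :: int where window: "0 \<le> star_coord \<theta> m n" "star_coord \<theta> m n < \<epsilon>"
      and x_eq: "x = of_int m * cos \<theta> - of_int n * sin \<theta>"
      by (auto simp: LambdaF_def star_coord_def)
    from j obtain k :: int where k: "j = of_int k" by (auto elim: Ints_cases)
    from eq have "t = - x" "u = j + t * (?lam / of_int d)" by simp_all
    with k have "u = of_int k - x * (?lam / of_int d)" by simp
    then have "u = (of_int (d * k - a * m - b * n) + star_coord \<theta> m n * star_coord \<theta> a b) / of_int d"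
      unfolding x_eq height .
    with window show "u \<in> section_set \<theta> \<epsilon> a b d"
      unfolding section_set_def by blast
  next
    fix u assume "u \<in> section_set \<theta> \<epsilon> a b d"
    then obtain k m n :: int where window: "0 \<le> star_coord \<theta> m n" "star_coord \<theta> m n < \<epsilon>"
      and u: "u = of_int k - (of_int m * cos \<theta> - of_int n * sin \<theta>) * (?lam / of_int d)"
      unfolding section_set_def height by blast
    define x where "x = of_int m * cos \<theta> - of_int n * sin \<theta>"
    have "(x, of_int k) \<in> Lambda \<theta> \<epsilon>"
      using window by (auto simp: Lambda_def LambdaF_def x_def star_coord_def)
    moreover have "(0, u) = (x, of_int k) + (- x) *\<^sub>R (1, ?lam / of_int d)"
      unfolding u x_def[symmetric] by simp
    ultimately show "u \<in> ?S" by blast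
  qed
qed

text \<open>The section lies in \<open>T\<close>: its elements are of the required form with \<open>t = x*\<close>.\<close>
lemma section_set_subset_window_hull:
  "section_set \<theta> \<epsilon> a b d \<subseteq> window_hull (star_coord \<theta> a b) \<epsilon> d"
  unfolding section_set_def window_hull_def by fastforce

lemma gcd3_representation:
  fixes a b d l :: int
  assumes g: "gcd a (gcd b d) = 1"
  obtains k m n where "d * k - a * m - b * n = l"
proof -
  obtain u v where uv: "u * a + v * gcd b d = 1" using bezout_int[of a "gcd b d"] g by auto
  obtain u' v' where uv': "u' * b + v' * d = gcd b d" using bezout_int[of b d] by auto
  have "l = l * (u * a + v * (u' * b + v' * d))" using uv uv' by simp
  then have "d * (l * v * v') - a * (- l * u) - b * (- l * v * u') = l"
    by (simp add: algebra_simps)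
  then show thesis by (rule that)
qed

text \<open>Key approximation step: the representation \<open>l = d k - a m - b n\<close> can be chosen with \<open>x*\<close>
  in any prescribed open interval, since shifting \<open>(m, n, k)\<close> by \<open>(d p, d q, a p + b q)\<close> keeps
  \<open>l\<close> and moves \<open>x*\<close> by \<open>d (p sin\<theta> + q cos\<theta>)\<close>, which is dense.\<close>
lemma representation_with_star_in_interval:
  assumes irr: "tan \<theta> \<notin> \<rat>" and d: "d \<noteq> 0" and g: "gcd a (gcd b d) = 1"
    and \<alpha>\<beta>: "\<alpha> < \<beta>"
  obtains k m n :: int
  where "d * k - a * m - b * n = l" "\<alpha> < star_coord \<theta> m n" "star_coord \<theta> m n < \<beta>"
proof -
  obtain k0 m0 n0 where rep: "d * k0 - a * m0 - b * n0 = l"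
    using gcd3_representation[OF g] .
  obtain p q where pq: "\<bar>of_int d * star_coord \<theta> p q - ((\<alpha> + \<beta>) / 2 - star_coord \<theta> m0 n0)\<bar> < (\<beta> - \<alpha>) / 2"
    using star_coord_multiples_dense[OF irr d] \<alpha>\<beta> by (metis diff_gt_0_iff_gt half_gt_zero)
  have "star_coord \<theta> (m0 + d * p) (n0 + d * q) = star_coord \<theta> m0 n0 + of_int d * star_coord \<theta> p q"
    by (simp add: star_coord_def algebra_simps)
  with pq have "\<alpha> < star_coord \<theta> (m0 + d * p) (n0 + d * q)" "star_coord \<theta> (m0 + d * p) (n0 + d * q) < \<beta>"
    by (auto simp: abs_less_iff field_simps)
  moreover have "d * (k0 + a * p + b * q) - a * (m0 + d * p) - b * (n0 + d * q) = l"
    using rep by (simp add: algebra_simps)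
  ultimately show thesis using that by blast
qed

text \<open>Density of the section in \<open>T\<close>: a point \<open>(l + t \<lambda>*) / d\<close> is approximated by section
  points \<open>(l + x* \<lambda>*) / d\<close> with \<open>x* \<in> [0, \<epsilon>)\<close> close to \<open>t\<close>.\<close>
lemma window_hull_subset_closure_section:
  assumes irr: "tan \<theta> \<notin> \<rat>" and eps: "\<epsilon> > 0" and d: "d \<noteq> 0"
    and ab: "(a, b) \<noteq> (0, 0)" and g: "gcd a (gcd b d) = 1"
  shows "window_hull (star_coord \<theta> a b) \<epsilon> d \<subseteq> closure (section_set \<theta> \<epsilon> a b d)"
proof
  let ?L = "star_coord \<theta> a b"
  have L: "?L \<noteq> 0" using star_coord_nonzero[OF irr ab] .
  fix y assume "y \<in> window_hull ?L \<epsilon> d"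
  then obtain l t where t: "0 \<le> t" "t \<le> \<epsilon>" and y: "y = (of_int l + t * ?L) / of_int d"
    unfolding window_hull_def by blast
  show "y \<in> closure (section_set \<theta> \<epsilon> a b d)"
    unfolding closure_approachable
  proof (intro allI impI)
    fix e :: real assume e: "e > 0"
    define r where "r = e * \<bar>of_int d\<bar> / \<bar>?L\<bar>"
    have r: "r > 0" unfolding r_def using e d L by simp
    have "max 0 (t - r) < min \<epsilon> (t + r)" using eps r t by auto
    then obtain k m n where rep: "d * k - a * m - b * n = l"
      and lo: "max 0 (t - r) < star_coord \<theta> m n" and hi: "star_coord \<theta> m n < min \<epsilon> (t + r)"
      by (rule representation_with_star_in_interval[OF irr d g])
    define z where "z = (of_int l + star_coord \<theta> m n * ?L) / of_int d"
    have "z \<in> section_set \<theta> \<epsilon> a b d"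
      using lo hi unfolding section_set_def z_def rep[symmetric] by force
    moreover have "dist z y = \<bar>star_coord \<theta> m n - t\<bar> * \<bar>?L\<bar> / \<bar>of_int d\<bar>"
      using d by (simp add: z_def y dist_real_def abs_mult flip: diff_divide_distrib left_diff_distrib)
    moreover have "\<dots> < r * \<bar>?L\<bar> / \<bar>of_int d\<bar>"
      using lo hi L d by (intro divide_strict_right_mono mult_strict_right_mono) auto
    moreover have "r * \<bar>?L\<bar> / \<bar>of_int d\<bar> = e" unfolding r_def using L d by simp
    ultimately show "\<exists>x\<in>section_set \<theta> \<epsilon> a b d. dist x y < e" by metis
  qed
qed

theorem theorem2:
  fixes \<theta> \<epsilon> :: real and a b d :: int
  assumes irr: "tan \<theta> \<notin> \<rat>"
    and eps: "\<epsilon> > 0"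
    and d: "d \<noteq> 0"
    and ab: "(a, b) \<noteq> (0, 0)"
    and g: "gcd a (gcd b d) = 1"
  defines "lam \<equiv> of_int a * cos \<theta> - of_int b * sin \<theta>"
    and "lams \<equiv> of_int a * sin \<theta> + of_int b * cos \<theta>"
  defines "w \<equiv> (1 :: real, lam / of_int d)"
  defines "S \<equiv> {s :: real. (0, s) \<in> {p + t *\<^sub>R w | p t. p \<in> Lambda \<theta> \<epsilon>}}"
  shows "(\<epsilon> \<ge> 1 / \<bar>lams\<bar> \<longrightarrow> closure S = UNIV)
       \<and> (\<epsilon> < 1 / \<bar>lams\<bar> \<longrightarrow>
            closure S = {(of_int l + t * lams) / of_int d | l t. 0 \<le> t \<and> t \<le> \<epsilon> \<and> l \<in> (UNIV :: int set)})"
proof -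
  have lams: "lams = star_coord \<theta> a b" by (simp add: lams_def star_coord_def)
  have S: "S = section_set \<theta> \<epsilon> a b d"
    unfolding S_def w_def lam_def using vertical_section_eq[OF d] .
  have "closure S = window_hull lams \<epsilon> d"
  proof
    show "closure S \<subseteq> window_hull lams \<epsilon> d"
      unfolding S lams by (intro closure_minimal section_set_subset_window_hull closed_window_hull d)
    show "window_hull lams \<epsilon> d \<subseteq> closure S"
      unfolding S lams using window_hull_subset_closure_section[OF irr eps d ab g] .
  qed
  moreover have "\<epsilon> \<ge> 1 / \<bar>lams\<bar> \<Longrightarrow> window_hull lams \<epsilon> d = UNIV"
    using window_hull_UNIV[OF d] star_coord_nonzero[OF irr ab] unfolding lams by blast
  ultimately show ?thesis unfolding window_hull_def by auto
qed

end
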